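(* Let $m\ge 2$ and let $F_m$ be the free group with basis $a_1,\dots,a_m$. Define $$\Delta_{F_m}(\mathbf z)=\sum_{g\in F_m} z_1^{|g|_{a_1^{\epsilon}}}\cdots z_m^{|g|_{a_m^{\epsilon}}},\qquad \mathbf z=(z_1,\dots,z_m),$$ where $|g|_{a_i^{\epsilon}}=|g|_{a_i}+|g|_{a_i^{-1}}$ is the total number of occurrences of $a_i$ and $a_i^{-1}$ in the freely reduced word representing $g$. Then $$\Delta_{F_m}(\mathbf z)=\frac{(1+z_1)\cdots(1+z_m)}{R(\mathbf z)},\qquad R(\mathbf z)=1-\sum_{l=1}^{m}(2l-1)\sum_{1\le i_1<\dots<i_l\le m} z_{i_1}\cdots z_{i_l}.$$
   Context: Identity of formal power series in $z_1,\dots,z_m$ (equivalently, of analytic functions near $\mathbf 0$). *)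

theory Defs
  imports "HOL-Analysis.Analysis"
begin

text \<open>Elements of the free group F_m on basis a_0,...,a_{m-1} are represented by their
unique freely reduced words. A letter is a pair (i, e): i is the generator index (i < m),
e = True means a_i and e = False means a_i^{-1}.\<close>

type_synonym letter = "nat \<times> bool"

definition inverse_letter :: "letter \<Rightarrow> letter" where
  "inverse_letter l = (fst l, \<not> snd l)"

fun freely_reduced :: "letter list \<Rightarrow> bool" where
  "freely_reduced [] = True"
| "freely_reduced [x] = True"
| "freely_reduced (x # y # ys) = (y \<noteq> inverse_letter x \<and> freely_reduced (y # ys))"

definition reduced_words :: "nat \<Rightarrow> letter list set" where
  "reduced_words m = {w. (\<forall>l\<in>set w. fst l < m) \<and> freely_reduced w}"

definition letter_count :: "nat \<Rightarrow> letter list \<Rightarrow> nat" where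
  "letter_count i w = length (filter (\<lambda>l. fst l = i) w)"

definition R_poly :: "nat \<Rightarrow> (nat \<Rightarrow> complex) \<Rightarrow> complex" where
  "R_poly m z = 1 - (\<Sum>l=1..m. of_nat (2*l - 1) *
       (\<Sum>S\<in>{S. S \<subseteq> {..<m} \<and> card S = l}. \<Prod>i\<in>S. z i))"

end

theory Submission
  imports Defs
begin

text \<open>
  Let D be the sum over all reduced words and D(l) the sum over those beginning with the
  letter l. A reduced word beginning with a_i^e is a_i^e followed by a reduced word not
  beginning with a_i^-e, so D(a_i^e) = z_i (D - D(a_i^-e)). Solving this pair of equations gives
  D(a_i) + D(a_i^-1) = 2 z_i D / (1 + z_i), and then D = 1 + sum_l D(l) yields
  D (1 - sum_i 2 z_i / (1 + z_i)) = 1. Expanding prod_i (1 + z_i) (1 - sum_i 2 z_i / (1 + z_i))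
  over the subsets of the generators gives R(z). Near 0 all rearrangements are justified by
  absolute convergence, as there are at most (2m)^n reduced words of length n.
\<close>

lemma sum_Pow_prod_eq_prod_one_plus:
  fixes z :: "'a \<Rightarrow> 'b::comm_semiring_1"
  assumes "finite A"
  shows "(\<Sum>S\<in>Pow A. \<Prod>i\<in>S. z i) = (\<Prod>i\<in>A. 1 + z i)"
  using prod_add[OF assms, of z "\<lambda>_. 1"] by (simp add: add.commute)

lemma sum_Pow_card_mult_prod:
  fixes z :: "'a \<Rightarrow> 'b::comm_semiring_1"
  assumes "finite A"
  shows "(\<Sum>S\<in>Pow A. of_nat (card S) * (\<Prod>i\<in>S. z i)) = (\<Sum>i\<in>A. z i * (\<Prod>j\<in>A - {i}. 1 + z j))"
  using assms
proof (induction A rule: finite_induct)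
  case empty
  then show ?case by simp
next
  case (insert a A)
  let ?C = "\<lambda>A. \<Sum>S\<in>Pow A. of_nat (card S) * (\<Prod>i\<in>S. z i)"
  have inj: "inj_on (insert a) (Pow A)"
    using insert.hyps by (intro inj_onI) (metis PowD insert_ident subset_iff)
  have "?C (insert a A) = ?C A + (\<Sum>S\<in>Pow A. of_nat (card (insert a S)) * (\<Prod>i\<in>insert a S. z i))"
    unfolding Pow_insert using insert.hyps
    by (subst sum.union_disjoint) (auto simp: sum.reindex[OF inj])
  also have "\<dots> = ?C A + (\<Sum>S\<in>Pow A. (of_nat (card S) + 1) * (z a * (\<Prod>i\<in>S. z i)))"
  proof -
    have "finite S" "a \<notin> S" if "S \<in> Pow A" for S
      using that insert.hyps finite_subset by auto
    then show ?thesis by (simp add: add.commute)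
  qed
  also have "\<dots> = (1 + z a) * ?C A + z a * (\<Prod>i\<in>A. 1 + z i)"
    by (simp add: sum_Pow_prod_eq_prod_one_plus[OF insert.hyps(1), symmetric]
        algebra_simps sum.distrib sum_distrib_left)
  also have "\<dots> = (\<Sum>i\<in>insert a A. z i * (\<Prod>j\<in>insert a A - {i}. 1 + z j))"
  proof -
    have "insert a A - {i} = insert a (A - {i})" if "i \<in> A" for i
      using that insert.hyps by auto
    then show ?thesis
      using insert by (simp add: sum_distrib_left algebra_simps cong: sum.cong)
  qed
  finally show ?case .
qed

lemma sum_Pow_one_minus_two_card_mult_prod:
  fixes z :: "'a \<Rightarrow> 'b::field"
  assumes "finite A" and "\<And>i. i \<in> A \<Longrightarrow> 1 + z i \<noteq> 0"
  shows "(\<Sum>S\<in>Pow A. (1 - 2 * of_nat (card S)) * (\<Prod>i\<in>S. z i))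
    = (\<Prod>i\<in>A. 1 + z i) * (1 - (\<Sum>i\<in>A. 2 * z i / (1 + z i)))"
proof -
  have "(\<Prod>j\<in>A - {i}. 1 + z j) = (\<Prod>j\<in>A. 1 + z j) / (1 + z i)" if "i \<in> A" for i
    using prod_diff1[OF assms(1), of "\<lambda>j. 1 + z j" i] assms(2) that by simp
  then have "(\<Sum>S\<in>Pow A. of_nat (card S) * (\<Prod>i\<in>S. z i))
      = (\<Sum>i\<in>A. z i * ((\<Prod>j\<in>A. 1 + z j) / (1 + z i)))"
    by (simp add: sum_Pow_card_mult_prod[OF assms(1)])
  also have "\<dots> = (\<Prod>i\<in>A. 1 + z i) * (\<Sum>i\<in>A. z i / (1 + z i))"
    by (simp add: sum_distrib_left mult.commute)
  finally have card_weighted: "(\<Sum>S\<in>Pow A. of_nat (card S) * (\<Prod>i\<in>S. z i))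
      = (\<Prod>i\<in>A. 1 + z i) * (\<Sum>i\<in>A. z i / (1 + z i))" .
  have "(\<Sum>S\<in>Pow A. (1 - 2 * of_nat (card S)) * (\<Prod>i\<in>S. z i))
      = (\<Sum>S\<in>Pow A. \<Prod>i\<in>S. z i) - 2 * (\<Sum>S\<in>Pow A. of_nat (card S) * (\<Prod>i\<in>S. z i))"
    by (simp add: left_diff_distrib sum_subtractf sum_distrib_left mult.assoc)
  also have "\<dots> = (\<Prod>i\<in>A. 1 + z i) - 2 * ((\<Prod>i\<in>A. 1 + z i) * (\<Sum>i\<in>A. z i / (1 + z i)))"
    by (simp add: card_weighted sum_Pow_prod_eq_prod_one_plus[OF assms(1)])
  also have "\<dots> = (\<Prod>i\<in>A. 1 + z i) * (1 - (\<Sum>i\<in>A. 2 * z i / (1 + z i)))"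
    by (simp add: sum_distrib_left algebra_simps)
  finally show ?thesis .
qed

lemma sum_Pow_by_card:
  fixes f :: "nat \<Rightarrow> 'b::semiring_0"
  assumes "finite A"
  shows "(\<Sum>S\<in>Pow A. f (card S) * g S)
    = (\<Sum>l\<le>card A. f l * (\<Sum>S\<in>{S. S \<subseteq> A \<and> card S = l}. g S))"
proof -
  have "card ` Pow A \<subseteq> {..card A}"
    using assms by (auto intro: card_mono)
  then have "(\<Sum>S\<in>Pow A. f (card S) * g S)
      = (\<Sum>l\<le>card A. \<Sum>S\<in>{S \<in> Pow A. card S = l}. f (card S) * g S)"
    using assms by (intro sum.group[symmetric]) auto
  also have "\<dots> = (\<Sum>l\<le>card A. f l * (\<Sum>S\<in>{S. S \<subseteq> A \<and> card S = l}. g S))"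
    by (simp add: sum_distrib_left)
  finally show ?thesis .
qed

lemma R_poly_eq_sum_Pow:
  "R_poly m z = (\<Sum>S\<in>Pow {..<m}. (1 - 2 * of_nat (card S)) * (\<Prod>i\<in>S. z i))"
proof -
  let ?e = "\<lambda>l. \<Sum>S\<in>{S. S \<subseteq> {..<m} \<and> card S = l}. \<Prod>i\<in>S. z i"
  have "{S. S \<subseteq> {..<m} \<and> card S = 0} = {{}}"
    by (auto dest: finite_subset)
  then have e0: "?e 0 = 1"
    by simp
  have "{..m} = insert 0 {1..m}"
    by auto
  then have "(\<Sum>S\<in>Pow {..<m}. (1 - 2 * of_nat (card S)) * (\<Prod>i\<in>S. z i))
      = 1 + (\<Sum>l=1..m. (1 - 2 * of_nat l) * ?e l)"
    using sum_Pow_by_card[of "{..<m}" "\<lambda>l. 1 - 2 * of_nat l" "\<lambda>S. \<Prod>i\<in>S. z i"]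
    by (simp add: e0)
  also have "\<dots> = R_poly m z"
    unfolding R_poly_def diff_conv_add_uminus sum_negf[symmetric]
    by (intro arg_cong2[where f = "(+)"] sum.cong) (auto simp: of_nat_diff algebra_simps)
  finally show ?thesis ..
qed

lemma R_poly_eq:
  assumes "\<And>i. i < m \<Longrightarrow> 1 + z i \<noteq> 0"
  shows "R_poly m z = (\<Prod>i<m. 1 + z i) * (1 - (\<Sum>i<m. 2 * z i / (1 + z i)))"
  unfolding R_poly_eq_sum_Pow using assms by (intro sum_Pow_one_minus_two_card_mult_prod) auto

lemma summable_on_power_length:
  fixes r :: real
  assumes "finite L" and "0 \<le> r" and "card L * r < 1"
  shows "(\<lambda>w. r ^ length w) summable_on {w. set w \<subseteq> L}"
proof (rule nonneg_bdd_above_summable_on)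
  let ?q = "card L * r"
  show "bdd_above (sum (\<lambda>w. r ^ length w) ` {F. F \<subseteq> {w. set w \<subseteq> L} \<and> finite F})"
  proof (rule bdd_aboveI2)
    fix F assume "F \<in> {F. F \<subseteq> {w. set w \<subseteq> L} \<and> finite F}"
    then have F: "F \<subseteq> {w. set w \<subseteq> L}" "finite F" by auto
    define N where "N = Max (length ` F)"
    let ?U = "{w. set w \<subseteq> L \<and> length w \<le> N}"
    have finU: "finite ?U"
      using assms(1) by (rule finite_lists_length_le)
    have "F \<subseteq> ?U"
      using F by (auto simp: N_def)
    then have "(\<Sum>w\<in>F. r ^ length w) \<le> (\<Sum>w\<in>?U. r ^ length w)"
      using finU assms(2) by (intro sum_mono2) auto
    also have "\<dots> = (\<Sum>n\<le>N. \<Sum>w\<in>{w \<in> ?U. length w = n}. r ^ length w)"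
      using finU by (intro sum.group[symmetric]) auto
    also have "\<dots> = (\<Sum>n\<le>N. ?q ^ n)"
    proof (rule sum.cong[OF refl])
      fix n assume "n \<in> {..N}"
      then have "{w \<in> ?U. length w = n} = {w. set w \<subseteq> L \<and> length w = n}"
        by auto
      then show "(\<Sum>w\<in>{w \<in> ?U. length w = n}. r ^ length w) = ?q ^ n"
        by (simp add: card_lists_length_eq[OF assms(1)] power_mult_distrib)
    qed
    also have "\<dots> \<le> (\<Sum>n. ?q ^ n)"
      using assms by (intro sum_le_suminf) auto
    finally show "(\<Sum>w\<in>F. r ^ length w) \<le> (\<Sum>n. ?q ^ n)" .
  qed
qed (use assms(2) in simp)

definition word_weight :: "nat \<Rightarrow> (nat \<Rightarrow> 'a::comm_monoid_mult) \<Rightarrow> letter list \<Rightarrow> 'a" where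
  "word_weight m z w = (\<Prod>i<m. z i ^ letter_count i w)"

lemma word_weight_Nil [simp]: "word_weight m z [] = 1"
  by (simp add: word_weight_def letter_count_def)

lemma word_weight_Cons:
  assumes "i < m"
  shows "word_weight m z ((i, e) # w) = z i * word_weight m z w"
proof -
  have "word_weight m z ((i, e) # w) = (\<Prod>j<m. (if j = i then z j else 1) * z j ^ letter_count j w)"
    unfolding word_weight_def by (intro prod.cong) (auto simp: letter_count_def)
  also have "\<dots> = z i * word_weight m z w"
    using assms by (simp add: prod.distrib prod.delta word_weight_def)
  finally show ?thesis .
qed

lemma norm_word_weight_le:
  fixes z :: "nat \<Rightarrow> 'a::real_normed_field"
  assumes "\<forall>l\<in>set w. fst l < m" and "\<And>i. i < m \<Longrightarrow> norm (z i) \<le> r"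
  shows "norm (word_weight m z w) \<le> r ^ length w"
  using assms(1)
proof (induction w)
  case Nil
  then show ?case by simp
next
  case (Cons l w)
  obtain i e where l: "l = (i, e)"
    by (cases l)
  with Cons.prems have "i < m"
    by simp
  have "0 \<le> r"
    using assms(2)[OF \<open>i < m\<close>] norm_ge_zero order_trans by blast
  from \<open>i < m\<close> have "norm (word_weight m z (l # w)) = norm (z i) * norm (word_weight m z w)"
    by (simp add: l word_weight_Cons norm_mult)
  also have "\<dots> \<le> r * r ^ length w"
    using Cons \<open>i < m\<close> \<open>0 \<le> r\<close> assms(2) by (intro mult_mono) auto
  finally show ?case
    by simp
qed

lemma summable_on_word_weight:
  fixes z :: "nat \<Rightarrow> 'a::{real_normed_field, banach}"
  assumes "\<And>i. i < m \<Longrightarrow> norm (z i) \<le> r" and "0 \<le> r" and "2 * m * r < 1"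
  shows "word_weight m z summable_on reduced_words m"
proof -
  let ?L = "{..<m} \<times> (UNIV :: bool set)"
  have "(\<lambda>w. r ^ length w) summable_on {w. set w \<subseteq> ?L}"
    using assms(2,3) by (intro summable_on_power_length) (auto simp: card_cartesian_product)
  moreover have "reduced_words m \<subseteq> {w. set w \<subseteq> ?L}"
    by (auto simp: reduced_words_def)
  ultimately have majorant: "(\<lambda>w. r ^ length w) summable_on reduced_words m"
    by (rule summable_on_subset_banach)
  have "word_weight m z abs_summable_on reduced_words m"
    by (rule Infinite_Sum.abs_summable_on_comparison_test'[OF majorant])
      (use norm_word_weight_le assms(1) in \<open>auto simp: reduced_words_def\<close>)
  then show ?thesis
    by (rule abs_summable_summable)
qed

lemma freely_reduced_Cons:
  "freely_reduced (l # w) \<longleftrightarrow> freely_reduced w \<and> (w = [] \<or> hd w \<noteq> inverse_letter l)"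
  by (cases w) auto

definition reduced_words_starting :: "nat \<Rightarrow> letter \<Rightarrow> letter list set" where
  "reduced_words_starting m l = {w \<in> reduced_words m. w \<noteq> [] \<and> hd w = l}"

lemma reduced_words_starting_eq_image:
  assumes "fst l < m"
  shows "reduced_words_starting m l
    = (#) l ` (reduced_words m - reduced_words_starting m (inverse_letter l))"
proof (intro equalityI subsetI)
  fix w assume "w \<in> reduced_words_starting m l"
  then obtain w' where "w = l # w'" and "w' \<in> reduced_words m - reduced_words_starting m (inverse_letter l)"
    by (cases w) (auto simp: reduced_words_starting_def reduced_words_def freely_reduced_Cons)
  then show "w \<in> (#) l ` (reduced_words m - reduced_words_starting m (inverse_letter l))"
    by blast
qed (use assms in \<open>auto simp: reduced_words_starting_def reduced_words_def freely_reduced_Cons\<close>)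

lemma reduced_words_eq_insert_Nil_UN:
  "reduced_words m = insert [] (\<Union>l\<in>{..<m} \<times> UNIV. reduced_words_starting m l)"
proof (intro equalityI subsetI)
  fix w assume w: "w \<in> reduced_words m"
  show "w \<in> insert [] (\<Union>l\<in>{..<m} \<times> UNIV. reduced_words_starting m l)"
  proof (cases w)
    case (Cons l w')
    with w show ?thesis
      by (cases l) (auto simp: reduced_words_starting_def reduced_words_def)
  qed simp
qed (auto simp: reduced_words_starting_def reduced_words_def)

context
  fixes m :: nat and z :: "nat \<Rightarrow> 'a::{real_normed_field, banach}"
  assumes summable: "word_weight m z summable_on reduced_words m"
begin

lemma summable_on_reduced_words_subset:
  "A \<subseteq> reduced_words m \<Longrightarrow> word_weight m z summable_on A"
  using summable by (rule summable_on_subset_banach)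

lemma infsum_reduced_words_starting:
  assumes "i < m"
  shows "infsum (word_weight m z) (reduced_words_starting m (i, e))
    = z i * (infsum (word_weight m z) (reduced_words m)
             - infsum (word_weight m z) (reduced_words_starting m (i, \<not> e)))"
proof -
  let ?rest = "reduced_words m - reduced_words_starting m (i, \<not> e)"
  have "infsum (word_weight m z) (reduced_words_starting m (i, e))
      = infsum (word_weight m z \<circ> (#) (i, e)) ?rest"
  proof -
    have "reduced_words_starting m (i, e) = (#) (i, e) ` ?rest"
      using assms reduced_words_starting_eq_image[of "(i, e)" m] by (simp add: inverse_letter_def)
    then show ?thesis
      by (simp add: infsum_reindex)
  qed
  also have "\<dots> = z i * infsum (word_weight m z) ?rest"
    using assms
    by (simp add: o_def word_weight_Cons infsum_cmult_right summable_on_reduced_words_subset Diff_subset)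
  also have "infsum (word_weight m z) ?rest
      = infsum (word_weight m z) (reduced_words m)
        - infsum (word_weight m z) (reduced_words_starting m (i, \<not> e))"
    by (intro infsum_Diff summable summable_on_reduced_words_subset)
      (auto simp: reduced_words_starting_def)
  finally show ?thesis .
qed

lemma infsum_reduced_words_starting_pair:
  assumes "i < m" and "1 + z i \<noteq> 0"
  shows "infsum (word_weight m z) (reduced_words_starting m (i, True))
      + infsum (word_weight m z) (reduced_words_starting m (i, False))
    = 2 * z i * infsum (word_weight m z) (reduced_words m) / (1 + z i)"
proof -
  let ?D = "infsum (word_weight m z) (reduced_words m)"
  let ?P = "infsum (word_weight m z) (reduced_words_starting m (i, True))"
  let ?N = "infsum (word_weight m z) (reduced_words_starting m (i, False))"
  have "?P = z i * (?D - ?N)" and "?N = z i * (?D - ?P)"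
    using infsum_reduced_words_starting[OF assms(1), of True]
      infsum_reduced_words_starting[OF assms(1), of False] by simp_all
  then have "(1 + z i) * (?P + ?N) = 2 * z i * ?D"
    by algebra
  with assms(2) show ?thesis
    by (simp add: field_simps)
qed

lemma infsum_reduced_words_eq_one_plus_sum:
  "infsum (word_weight m z) (reduced_words m)
    = 1 + (\<Sum>i<m. infsum (word_weight m z) (reduced_words_starting m (i, True))
                 + infsum (word_weight m z) (reduced_words_starting m (i, False)))"
proof -
  let ?L = "{..<m} \<times> (UNIV :: bool set)"
  let ?U = "\<Union>l\<in>?L. reduced_words_starting m l"
  have "?U \<subseteq> reduced_words m" and "[] \<notin> ?U"
    by (auto simp: reduced_words_starting_def)
  then have "infsum (word_weight m z) (reduced_words m) = 1 + infsum (word_weight m z) ?U"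
    by (subst reduced_words_eq_insert_Nil_UN)
      (simp add: infsum_insert summable_on_reduced_words_subset)
  also have "infsum (word_weight m z) ?U = (\<Sum>l\<in>?L. infsum (word_weight m z) (reduced_words_starting m l))"
    by (intro sum_infsum[symmetric] summable_on_reduced_words_subset)
      (auto simp: reduced_words_starting_def)
  also have "\<dots> = (\<Sum>i<m. infsum (word_weight m z) (reduced_words_starting m (i, True))
                 + infsum (word_weight m z) (reduced_words_starting m (i, False)))"
    by (simp add: sum.cartesian_product' UNIV_bool add.commute)
  finally show ?thesis .
qed

lemma infsum_word_weight_mult_eq_1:
  assumes "\<And>i. i < m \<Longrightarrow> 1 + z i \<noteq> 0"
  shows "infsum (word_weight m z) (reduced_words m) * (1 - (\<Sum>i<m. 2 * z i / (1 + z i))) = 1"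
proof -
  let ?D = "infsum (word_weight m z) (reduced_words m)"
  have "?D = 1 + (\<Sum>i<m. 2 * z i * ?D / (1 + z i))"
    using infsum_reduced_words_eq_one_plus_sum infsum_reduced_words_starting_pair assms by simp
  also have "\<dots> = 1 + ?D * (\<Sum>i<m. 2 * z i / (1 + z i))"
    by (simp add: sum_distrib_left mult_ac)
  finally show ?thesis
    by (simp add: algebra_simps)
qed

end

lemma has_sum_word_weight:
  fixes z :: "nat \<Rightarrow> complex"
  assumes summable: "word_weight m z summable_on reduced_words m"
    and nonzero: "\<And>i. i < m \<Longrightarrow> 1 + z i \<noteq> 0"
  shows "(word_weight m z has_sum ((\<Prod>i<m. 1 + z i) / R_poly m z)) (reduced_words m)"
proof -
  let ?D = "infsum (word_weight m z) (reduced_words m)"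
  let ?s = "1 - (\<Sum>i<m. 2 * z i / (1 + z i))"
  have D_s: "?D * ?s = 1"
    using summable nonzero by (rule infsum_word_weight_mult_eq_1)
  then have "?s \<noteq> 0"
    by auto
  have "(\<Prod>i<m. 1 + z i) \<noteq> 0"
    using nonzero by simp
  with \<open>?s \<noteq> 0\<close> D_s have "?D = (\<Prod>i<m. 1 + z i) / ((\<Prod>i<m. 1 + z i) * ?s)"
    by (simp add: eq_divide_eq)
  also have "\<dots> = (\<Prod>i<m. 1 + z i) / R_poly m z"
    using nonzero by (simp add: R_poly_eq)
  finally have "?D = (\<Prod>i<m. 1 + z i) / R_poly m z" .
  with summable show ?thesis
    by (metis has_sum_infsum)
qed

theorem proposition2:
  fixes m :: nat
  assumes "m \<ge> 2"
  shows "\<exists>r>0. \<forall>z :: nat \<Rightarrow> complex. (\<forall>i<m. norm (z i) < r) \<longrightarrow>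
           ((\<lambda>w. \<Prod>i<m. z i ^ letter_count i w) has_sum
              ((\<Prod>i<m. 1 + z i) / R_poly m z)) (reduced_words m)"
proof (intro exI[of _ "1 / (4 * real m)"] conjI allI impI)
  show "1 / (4 * real m) > 0"
    using assms by simp
  fix z :: "nat \<Rightarrow> complex"
  assume small: "\<forall>i<m. norm (z i) < 1 / (4 * real m)"
  then have bound: "norm (z i) \<le> 1 / (4 * real m)" if "i < m" for i
    using that by (simp add: less_imp_le)
  have "word_weight m z summable_on reduced_words m"
    using assms by (intro summable_on_word_weight[OF bound]) auto
  moreover have "1 + z i \<noteq> 0" if "i < m" for i
  proof
    assume "1 + z i = 0"
    then have "norm (z i) = 1"
      by (simp add: add_eq_0_iff)
    with bound[OF that] assms show False
      by (simp add: field_simps)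
  qed
  ultimately show "((\<lambda>w. \<Prod>i<m. z i ^ letter_count i w) has_sum
      ((\<Prod>i<m. 1 + z i) / R_poly m z)) (reduced_words m)"
    using has_sum_word_weight unfolding word_weight_def by blast
qed

end
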